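(* In the setting described in the context, let $(H,F^\bullet,W_\bullet)$ be the limiting mixed Hodge structure on $H=H^3(Y_s;\mathbb{C})$, $s\in S^*$. Then $$\dim_{\mathbb{C}}\bigl(F^2\cap\overline{F^1}\bigr)=h+1,$$ where $h=h^{2,1}(X)$.
   Context: Setting: $X$ is a projective Calabi-Yau threefold with $h=\dim H^1(X;\Omega^2_X)$, so $\dim H^3(X;\mathbb{C})=2h+2$. $C_1,\dots,C_r\subset X$ are disjoint smooth rational curves with normal bundles $\mathcal{O}(-1)\oplus\mathcal{O}(-1)$, whose classes span $H^4(X;\mathbb{C})$ and satisfy $\sum m_i[C_i]=0$ with all $m_i\ne0$; $\bar X$ is the contraction of the $C_i$ to ordinary double points. Let $\bar S$ be the base (a germ of $\mathbb{T}^1_{\bar X}=\mathrm{Ext}^1(\Omega^1_{\bar X},\mathcal{O}_{\bar X})$) of the semi-universal deformation of $\bar X$, let $S\to\bar S$ be the double cover branched along the smooth hypersurface $\bar S\cap H^1(\bar X,T^0_{\bar X})$, $D\subset S$ the inverse image of that hypersurface, and $\pi:\mathcal{Y}\to S$ the family obtained by pulling back the deformation and blowing up the singular points of the total space; $\mathcal{Y}$ is smooth and $\pi^{-1}(D)$ is a normal crossing divisor. Identify $S\cong\Delta^h\times\Delta$ with $D=\{\zeta=0\}$ and $S^*=S\setminus D$. The central fibre is $Y_0=\tilde X\cup\bigcup_i Q_i$, where $\tilde X$ is the blow-up of $X$ along the $C_i$ with exceptional divisors $E_i\cong\mathbb{P}^1\times\mathbb{P}^1$, $Q_i\subset\mathbb{P}^4$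 a smooth quadric containing $E_i$ as a hyperplane section, glued along $E_i$. The limiting mixed Hodge structure $(H,F^\bullet,W_\bullet)$ on $H=H^3(Y_s;\mathbb{C})$ ($s\in S^*$), defined over $\mathbb{Q}$ (Schmid, Steenbrink), has the following known properties: $0=W_1\subset W_2\subset W_3\subset W_4=H$ with $W_2\cong\mathbb{Q}(-1)$ one-dimensional, $W_3/W_2\cong H^3(\tilde X)\cong H^3(X)$ as Hodge structures, $W_4/W_3\cong\mathbb{Q}(-2)$; $\dim F^1=2h+3$ and $W_2\subset F^1$; $\dim F^2=h+2$, $F^2\cap W_2=0$ and $F^2+W_3=H$; $F^3\subseteq W_3$. Complex conjugation is with respect to the rational structure $H^3(Y_s;\mathbb{Q})$. *)

theory Defs
  imports "HOL-Analysis.Analysis"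
begin

text \<open>The complex vector space H is modelled as complex^'n with its rational
structure H_Q = Q^n (coordinates chosen in a rational basis).\<close>

definition cconj :: "complex ^ 'n \<Rightarrow> complex ^ 'n" where
  "cconj x = (\<chi> i. cnj (x $ i))"

definition conjset :: "(complex ^ 'n) set \<Rightarrow> (complex ^ 'n) set" where
  "conjset V = cconj ` V"

definition rational_points :: "(complex ^ 'n) set" where
  "rational_points = {x. \<forall>i. x $ i \<in> \<rat>}"

definition defined_over_Q :: "(complex ^ 'n) set \<Rightarrow> bool" where
  "defined_over_Q V \<longleftrightarrow> vec.subspace V \<and> V = vec.span (V \<inter> rational_points)"

definition ssum :: "(complex ^ 'n) set \<Rightarrow> (complex ^ 'n) set \<Rightarrow> (complex ^ 'n) set" where
  "ssum A B = {a + b | a b. a \<in> A \<and> b \<in> B}"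

text \<open>Gr^W_k with the induced filtration is a pure Hodge structure of weight k:
F^p Gr_k and conj(F^(k+1-p)) Gr_k are complementary in Gr_k = W_k / W_(k-1).\<close>
definition pure_graded :: "(int \<Rightarrow> (complex ^ 'n) set) \<Rightarrow> (int \<Rightarrow> (complex ^ 'n) set) \<Rightarrow> int \<Rightarrow> bool" where
  "pure_graded W F k \<longleftrightarrow> (\<forall>p.
     ssum (ssum (F p \<inter> W k) (conjset (F (k + 1 - p)) \<inter> W k)) (W (k - 1)) = W k \<and>
     ssum (F p \<inter> W k) (W (k - 1)) \<inter> ssum (conjset (F (k + 1 - p)) \<inter> W k) (W (k - 1))
       \<subseteq> W (k - 1))"

definition mixed_hodge_structure :: "(int \<Rightarrow> (complex ^ 'n) set) \<Rightarrow> (int \<Rightarrow> (complex ^ 'n) set) \<Rightarrow> bool" where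
  "mixed_hodge_structure W F \<longleftrightarrow>
     (\<forall>k. defined_over_Q (W k)) \<and> (\<forall>k l. k \<le> l \<longrightarrow> W k \<subseteq> W l) \<and>
     (\<exists>a. W a = {0}) \<and> (\<exists>b. W b = UNIV) \<and>
     (\<forall>p. vec.subspace (F p)) \<and> (\<forall>p q. p \<le> q \<longrightarrow> F q \<subseteq> F p) \<and>
     (\<exists>a. F a = UNIV) \<and> (\<exists>b. F b = {0}) \<and>
     (\<forall>k. pure_graded W F k)"

text \<open>dim_C of F^p Gr^W_k = (F^p \<inter> W_k + W_(k-1)) / W_(k-1).\<close>
definition grF_dim :: "(int \<Rightarrow> (complex ^ 'n) set) \<Rightarrow> (int \<Rightarrow> (complex ^ 'n) set) \<Rightarrow> int \<Rightarrow> int \<Rightarrow> nat" where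
  "grF_dim W F k p = vec.dim (ssum (F p \<inter> W k) (W (k - 1))) - vec.dim (W (k - 1))"

end

theory Submission
  imports Defs
begin

(* Since dim F^2 + dim F^1 = (h + 2) + (2h + 3) exceeds dim H = 2h + 4 by h + 1, the
   intersection F^2 \<inter> conj F^1 has dimension at least h + 1, and it remains to see that it
   is a proper subspace of F^2.  Take f \<in> F^3 \<inter> W_3 not in W_2 (it exists because
   dim F^3 Gr_3 = 1).  If f \<in> conj F^1, then conj f lies in F^1 \<inter> conj F^3 \<inter> W_3, which by
   purity of Gr_3 (F^1 and conj F^3 are complementary there) is contained in W_2; as W_2 is
   defined over \<rat>, also f \<in> W_2, a contradiction. *)

lemma cconj_cconj [simp]: "cconj (cconj x) = x"
  by (simp add: cconj_def vec_eq_iff)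

lemma cconj_add: "cconj (x + y) = cconj x + cconj y"
  by (simp add: cconj_def vec_eq_iff)

lemma cconj_scale: "cconj (c *s x) = cnj c *s cconj x"
  by (simp add: cconj_def vec_eq_iff)

lemma cconj_zero [simp]: "cconj 0 = 0"
  by (simp add: cconj_def vec_eq_iff)

lemma mem_conjset_iff: "x \<in> conjset V \<longleftrightarrow> cconj x \<in> V"
  unfolding conjset_def by (metis cconj_cconj image_iff)

lemma cnj_Rats: "z \<in> \<rat> \<Longrightarrow> cnj z = z"
  by (auto elim!: Rats_cases simp: Reals_cnj_iff[symmetric] of_rat_def)

lemma cconj_rational_point: "x \<in> rational_points \<Longrightarrow> cconj x = x"
  by (simp add: rational_points_def cconj_def vec_eq_iff cnj_Rats)

lemma cconj_in_span_image: "x \<in> vec.span S \<Longrightarrow> cconj x \<in> vec.span (cconj ` S)"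
proof (induction rule: vec.span_induct_alt)
  case base
  then show ?case by (simp add: vec.span_zero)
next
  case (step c x y)
  then have "cnj c *s cconj x \<in> vec.span (cconj ` S)"
    by (simp add: vec.span_base vec.span_scale)
  with step.IH show ?case by (simp add: cconj_add cconj_scale vec.span_add)
qed

lemma dim_cconj_image_le: "vec.dim (cconj ` V) \<le> vec.dim V"
proof -
  obtain B where B: "vec.independent B" "V \<subseteq> vec.span B" "card B = vec.dim V"
    by (rule vec.basis_exists)
  have "finite B" using B(1) vec.finiteI_independent by blast
  have "cconj ` V \<subseteq> vec.span (cconj ` B)" using B(2) cconj_in_span_image by blast
  then have "vec.dim (cconj ` V) \<le> card (cconj ` B)"
    using \<open>finite B\<close> by (simp add: vec.dim_le_card)
  also have "\<dots> \<le> card B" using \<open>finite B\<close> by (rule card_image_le)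
  finally show ?thesis using B(3) by simp
qed

lemma dim_conjset: "vec.dim (conjset V) = vec.dim V"
proof (rule antisym)
  show "vec.dim (conjset V) \<le> vec.dim V"
    unfolding conjset_def by (rule dim_cconj_image_le)
  have "vec.dim (cconj ` cconj ` V) \<le> vec.dim (cconj ` V)" by (rule dim_cconj_image_le)
  then show "vec.dim V \<le> vec.dim (conjset V)" by (simp add: conjset_def image_image)
qed

lemma subspace_conjset:
  assumes "vec.subspace V"
  shows "vec.subspace (conjset V)"
  using vec.subspace_0[OF assms] vec.subspace_add[OF assms] vec.subspace_scale[OF assms]
  by (simp add: vec.subspace_def mem_conjset_iff cconj_add cconj_scale)

lemma defined_over_Q_cconj:
  assumes "defined_over_Q V" "x \<in> V"
  shows "cconj x \<in> V"
proof -
  have span: "vec.span (V \<inter> rational_points) = V"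
    using assms(1) unfolding defined_over_Q_def by blast
  have "cconj ` (V \<inter> rational_points) = id ` (V \<inter> rational_points)"
    by (rule image_cong) (simp_all add: cconj_rational_point)
  then have fixed: "cconj ` (V \<inter> rational_points) = V \<inter> rational_points"
    by (simp only: image_id id_apply)
  have "cconj x \<in> vec.span (cconj ` (V \<inter> rational_points))"
    using assms(2) span by (intro cconj_in_span_image) (simp only:)
  then show ?thesis by (simp only: fixed span)
qed

lemma dim_Int_ge:
  fixes U V :: "('a::field ^ 'n) set"
  assumes "vec.subspace U" "vec.subspace V"
  shows "vec.dim U + vec.dim V \<le> vec.dim (U \<inter> V) + CARD('n)"
  using vec.dim_sums_Int[OF assms]
    dim_subset_UNIV_cart_gen[of "{x + y |x y. x \<in> U \<and> y \<in> V}"]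
  by linarith

lemma dim_Int_less:
  assumes "vec.subspace U" "vec.subspace V" "x \<in> U" "x \<notin> V"
  shows "vec.dim (U \<inter> V) < vec.dim U"
  using vec.subspace_dim_equal[OF vec.subspace_inter[OF assms(1,2)] assms(1)] assms(3,4)
  by (metis IntE Int_lower1 not_less)

lemma in_ssum_left: "a \<in> A \<Longrightarrow> 0 \<in> B \<Longrightarrow> a \<in> ssum A B"
  unfolding ssum_def by force

lemma grF_dim_nonzero_witness:
  assumes "vec.subspace (W (k - 1))" "grF_dim W F k p \<noteq> 0"
  obtains x where "x \<in> F p" "x \<in> W k" "x \<notin> W (k - 1)"
proof (rule ccontr)
  assume "\<not> thesis"
  with that have "F p \<inter> W k \<subseteq> W (k - 1)" by blast
  then have "ssum (F p \<inter> W k) (W (k - 1)) \<subseteq> W (k - 1)"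
    using vec.subspace_add[OF assms(1)] unfolding ssum_def by auto
  then have "vec.dim (ssum (F p \<inter> W k) (W (k - 1))) \<le> vec.dim (W (k - 1))"
    by (rule vec.dim_subset)
  with assms(2) show False unfolding grF_dim_def by simp
qed

lemma pure_graded_Int_conjset:
  assumes "pure_graded W F k" "0 \<in> W (k - 1)"
    and "x \<in> W k" "x \<in> F p" "x \<in> conjset (F (k + 1 - p))"
  shows "x \<in> W (k - 1)"
  using assms in_ssum_left[of x _ "W (k - 1)"] unfolding pure_graded_def by blast

theorem lemma3p3:
  fixes h :: nat
    and W F :: "int \<Rightarrow> (complex ^ 'n) set"
  assumes dimH: "CARD('n) = 2 * h + 4"
    and mhs: "mixed_hodge_structure W F"
    and W1: "W 1 = {0}" and W12: "W 1 \<subseteq> W 2" and W23: "W 2 \<subseteq> W 3" and W34: "W 3 \<subseteq> W 4"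
    and W4: "W 4 = UNIV"
    and W2_dim: "vec.dim (W 2) = 1"
    and W2_F1: "W 2 \<subseteq> F 1" and W2_F2: "F 2 \<inter> W 2 = {0}"
    and Gr3_dim: "vec.dim (W 3) - vec.dim (W 2) = 2 * h + 2"
    and Gr3_F0: "grF_dim W F 3 0 = 2 * h + 2"
    and Gr3_F1: "grF_dim W F 3 1 = 2 * h + 1"
    and Gr3_F2: "grF_dim W F 3 2 = h + 1"
    and Gr3_F3: "grF_dim W F 3 3 = 1"
    and Gr3_F4: "grF_dim W F 3 4 = 0"
    and Gr4_dim: "vec.dim (W 4) - vec.dim (W 3) = 1"
    and F1_dim: "vec.dim (F 1) = 2 * h + 3"
    and F2_dim: "vec.dim (F 2) = h + 2"
    and F2_W3: "ssum (F 2) (W 3) = UNIV"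
    and F3_W3: "F 3 \<subseteq> W 3"
  shows "vec.dim (F 2 \<inter> conjset (F 1)) = h + 1"
proof -
  have W_Q: "defined_over_Q (W k)" and F_sub: "vec.subspace (F p)"
    and F_mono: "p \<le> q \<Longrightarrow> F q \<subseteq> F p" and pure: "pure_graded W F k" for k p q
    using mhs unfolding mixed_hodge_structure_def by auto
  have W2_sub: "vec.subspace (W 2)" using W_Q[of 2] by (simp add: defined_over_Q_def)
  have conjF1_sub: "vec.subspace (conjset (F 1))" by (rule subspace_conjset[OF F_sub])
  obtain f where f: "f \<in> F 3" "f \<in> W 3" "f \<notin> W 2"
    using grF_dim_nonzero_witness[of W 3 F 3] W2_sub Gr3_F3 by auto
  have "f \<notin> conjset (F 1)"
  proof
    assume "f \<in> conjset (F 1)"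
    then have "cconj f \<in> F 1" by (simp add: mem_conjset_iff)
    moreover have "cconj f \<in> conjset (F 3)" using f(1) by (simp add: mem_conjset_iff)
    moreover have "cconj f \<in> W 3" using defined_over_Q_cconj[OF W_Q f(2)] .
    ultimately have "cconj f \<in> W 2"
      using pure_graded_Int_conjset[OF pure, of 3 "cconj f" 1] vec.subspace_0[OF W2_sub] by simp
    with f(3) show False using defined_over_Q_cconj[OF W_Q, of "cconj f" 2] by simp
  qed
  moreover have "f \<in> F 2" using f(1) F_mono[of 2 3] by auto
  ultimately have "vec.dim (F 2 \<inter> conjset (F 1)) < h + 2"
    using dim_Int_less[OF F_sub[of 2] conjF1_sub, of f] F2_dim by simp
  moreover have "h + 1 \<le> vec.dim (F 2 \<inter> conjset (F 1))"
    using dim_Int_ge[OF F_sub[of 2] conjF1_sub] dim_conjset[of "F 1"] F1_dim F2_dim dimH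
    by linarith
  ultimately show ?thesis by linarith
qed

end
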